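(* Let $\Omega\subseteq\mathbb{R}^n$ be open and let $f\in\mathbb{A}(\Omega)$ be H-continuous. If there is a dense subset $D$ of $\Omega$ (not necessarily open) such that $f(x)$ is finite for every $x\in D$, then $f$ is nearly finite.
   Context: $\overline{\mathbb{R}}=\mathbb{R}\cup\{\pm\infty\}$, $\mathbb{I}\overline{\mathbb{R}}$ is the set of closed intervals $[\underline a,\overline a]$ with $\underline a\le\overline a$ in $\overline{\mathbb{R}}$, $a\in\overline{\mathbb{R}}$ identified with $[a,a]$. $\mathbb{A}(\Omega)$ is the set of functions $\Omega\to\mathbb{I}\overline{\mathbb{R}}$. An interval value $f(x)$ is finite if both endpoints are real numbers; $f$ is nearly finite if there is an open dense subset $D'$ of $\Omega$ with $f(x)$ finite for all $x\in D'$. $B_\delta(x)=\{y\in\Omega:\|x-y\|<\delta\}$. For $f\in\mathbb{A}(\Omega)$: $I(f)(x)=\sup_{\delta>0}\inf\{z\in f(y):y\in B_\delta(x)\}$, $S(f)(x)=\inf_{\delta>0}\sup\{z\in f(y):y\in B_\delta(x)\}$, $F(f)(x)=[I(f)(x),S(f)(x)]$. $f$ is H-continuous if for every $g\in\mathbb{A}(\Omega)$ with $g(x)\subseteq f(x)$ for all $x$ one has $F(g)=f$. *)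

theory Defs
  imports "HOL-Analysis.Analysis"
begin

text \<open>An extended-real interval [a,b] is represented by the pair (a,b) with a \<le> b.\<close>
type_synonym iereal = "ereal \<times> ereal"

definition ival :: "iereal \<Rightarrow> ereal set" where
  "ival a = {z. fst a \<le> z \<and> z \<le> snd a}"

definition intfun :: "(real^'n) set \<Rightarrow> (real^'n \<Rightarrow> iereal) \<Rightarrow> bool" where
  "intfun \<Omega> f \<longleftrightarrow> (\<forall>x\<in>\<Omega>. fst (f x) \<le> snd (f x))"

definition Ball_in :: "(real^'n) set \<Rightarrow> real^'n \<Rightarrow> real \<Rightarrow> (real^'n) set" where
  "Ball_in \<Omega> x \<delta> = {y\<in>\<Omega>. norm (x - y) < \<delta>}"

definition lowerI :: "(real^'n) set \<Rightarrow> (real^'n \<Rightarrow> iereal) \<Rightarrow> real^'n \<Rightarrow> ereal" where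
  "lowerI \<Omega> f x = (SUP \<delta>\<in>{0<..}. Inf {z. \<exists>y\<in>Ball_in \<Omega> x \<delta>. z \<in> ival (f y)})"

definition upperS :: "(real^'n) set \<Rightarrow> (real^'n \<Rightarrow> iereal) \<Rightarrow> real^'n \<Rightarrow> ereal" where
  "upperS \<Omega> f x = (INF \<delta>\<in>{0<..}. Sup {z. \<exists>y\<in>Ball_in \<Omega> x \<delta>. z \<in> ival (f y)})"

definition Fop :: "(real^'n) set \<Rightarrow> (real^'n \<Rightarrow> iereal) \<Rightarrow> real^'n \<Rightarrow> iereal" where
  "Fop \<Omega> f x = (lowerI \<Omega> f x, upperS \<Omega> f x)"

definition H_continuous :: "(real^'n) set \<Rightarrow> (real^'n \<Rightarrow> iereal) \<Rightarrow> bool" where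
  "H_continuous \<Omega> f \<longleftrightarrow>
     (\<forall>g. intfun \<Omega> g \<and> (\<forall>x\<in>\<Omega>. ival (g x) \<subseteq> ival (f x)) \<longrightarrow> (\<forall>x\<in>\<Omega>. Fop \<Omega> g x = f x))"

definition finite_ival :: "iereal \<Rightarrow> bool" where
  "finite_ival a \<longleftrightarrow> \<bar>fst a\<bar> \<noteq> \<infinity> \<and> \<bar>snd a\<bar> \<noteq> \<infinity>"

definition nearly_finite :: "(real^'n) set \<Rightarrow> (real^'n \<Rightarrow> iereal) \<Rightarrow> bool" where
  "nearly_finite \<Omega> f \<longleftrightarrow>
     (\<exists>D'. open D' \<and> D' \<subseteq> \<Omega> \<and> \<Omega> \<subseteq> closure D' \<and> (\<forall>x\<in>D'. finite_ival (f x)))"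

end

theory Submission
  imports Defs
begin

text \<open>H-continuity applied to g = f gives F(f) = f, so the lower endpoint of f is the lower
  semicontinuous envelope I(f) and the upper endpoint is the upper semicontinuous envelope S(f).
  Hence the set where both endpoints are finite, i.e. where I(f) > -\<infinity> and S(f) < \<infinity>, is open;
  it contains the dense set D, so it is the required open dense set.\<close>

lemma Ball_in_subset_Ball_in:
  assumes "dist x y + e \<le> d"
  shows "Ball_in \<Omega> y e \<subseteq> Ball_in \<Omega> x d"
proof
  fix w assume "w \<in> Ball_in \<Omega> y e"
  then have "w \<in> \<Omega>" "dist y w < e" by (auto simp: Ball_in_def dist_norm)
  moreover have "dist x w \<le> dist x y + dist y w" by (rule dist_triangle)
  ultimately show "w \<in> Ball_in \<Omega> x d" using assms by (auto simp: Ball_in_def dist_norm)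
qed

lemma Ball_in_values_mono:
  assumes "dist x y + e \<le> d"
  shows "{z. \<exists>w\<in>Ball_in \<Omega> y e. z \<in> ival (f w)} \<subseteq> {z. \<exists>w\<in>Ball_in \<Omega> x d. z \<in> ival (f w)}"
  using Ball_in_subset_Ball_in[OF assms] by blast

lemma open_lowerI_superlevel:
  assumes "open \<Omega>"
  shows "open {x\<in>\<Omega>. c < lowerI \<Omega> f x}"
  unfolding open_contains_ball
proof
  fix x assume "x \<in> {x\<in>\<Omega>. c < lowerI \<Omega> f x}"
  then have x: "x \<in> \<Omega>" "c < lowerI \<Omega> f x" by auto
  then obtain d where d: "d > 0" "c < Inf {z. \<exists>w\<in>Ball_in \<Omega> x d. z \<in> ival (f w)}"
    unfolding lowerI_def less_SUP_iff by auto
  obtain e where e: "e > 0" "ball x e \<subseteq> \<Omega>"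
    using assms x(1) open_contains_ball by blast
  have "c < lowerI \<Omega> f y" if "dist x y < d/2" for y
  proof -
    have "c < Inf {z. \<exists>w\<in>Ball_in \<Omega> x d. z \<in> ival (f w)}" by (fact d(2))
    also have "\<dots> \<le> Inf {z. \<exists>w\<in>Ball_in \<Omega> y (d/2). z \<in> ival (f w)}"
      by (rule Inf_superset_mono, rule Ball_in_values_mono) (use that in simp)
    also have "\<dots> \<le> lowerI \<Omega> f y"
      unfolding lowerI_def by (rule SUP_upper) (use d in simp)
    finally show ?thesis .
  qed
  then show "\<exists>r>0. ball x r \<subseteq> {x\<in>\<Omega>. c < lowerI \<Omega> f x}"
    using d(1) e by (intro exI[of _ "min e (d/2)"]) auto
qed

lemma open_upperS_sublevel:
  assumes "open \<Omega>"
  shows "open {x\<in>\<Omega>. upperS \<Omega> f x < c}"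
  unfolding open_contains_ball
proof
  fix x assume "x \<in> {x\<in>\<Omega>. upperS \<Omega> f x < c}"
  then have x: "x \<in> \<Omega>" "upperS \<Omega> f x < c" by auto
  then obtain d where d: "d > 0" "Sup {z. \<exists>w\<in>Ball_in \<Omega> x d. z \<in> ival (f w)} < c"
    unfolding upperS_def INF_less_iff by auto
  obtain e where e: "e > 0" "ball x e \<subseteq> \<Omega>"
    using assms x(1) open_contains_ball by blast
  have "upperS \<Omega> f y < c" if "dist x y < d/2" for y
  proof -
    have "upperS \<Omega> f y \<le> Sup {z. \<exists>w\<in>Ball_in \<Omega> y (d/2). z \<in> ival (f w)}"
      unfolding upperS_def by (rule INF_lower) (use d in simp)
    also have "\<dots> \<le> Sup {z. \<exists>w\<in>Ball_in \<Omega> x d. z \<in> ival (f w)}"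
      by (rule Sup_subset_mono, rule Ball_in_values_mono) (use that in simp)
    also have "\<dots> < c" by (fact d(2))
    finally show ?thesis .
  qed
  then show "\<exists>r>0. ball x r \<subseteq> {x\<in>\<Omega>. upperS \<Omega> f x < c}"
    using d(1) e by (intro exI[of _ "min e (d/2)"]) auto
qed

lemma Fop_eq_if_H_continuous:
  assumes "intfun \<Omega> f" "H_continuous \<Omega> f" "x \<in> \<Omega>"
  shows "Fop \<Omega> f x = f x"
  using assms unfolding H_continuous_def by blast

lemma finite_ival_iff:
  assumes "fst a \<le> snd a"
  shows "finite_ival a \<longleftrightarrow> -\<infinity> < fst a \<and> snd a < \<infinity>"
  using assms unfolding finite_ival_def by (cases "fst a"; cases "snd a") auto

lemma open_finite_ival_set_if_H_continuous:
  assumes "open \<Omega>" "intfun \<Omega> f" "H_continuous \<Omega> f"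
  shows "open {x\<in>\<Omega>. finite_ival (f x)}"
proof -
  have "f x = (lowerI \<Omega> f x, upperS \<Omega> f x)" if "x \<in> \<Omega>" for x
    using Fop_eq_if_H_continuous[OF assms(2,3) that] by (simp add: Fop_def)
  then have level_sets: "{x\<in>\<Omega>. finite_ival (f x)} =
      {x\<in>\<Omega>. -\<infinity> < lowerI \<Omega> f x} \<inter> {x\<in>\<Omega>. upperS \<Omega> f x < \<infinity>}"
    using assms(2) by (auto simp: intfun_def finite_ival_iff)
  show ?thesis
    unfolding level_sets by (intro open_Int open_lowerI_superlevel open_upperS_sublevel assms(1))
qed

theorem theorem22:
  fixes \<Omega> :: "(real^'n) set" and f :: "real^'n \<Rightarrow> ereal \<times> ereal" and D :: "(real^'n) set"
  assumes "open \<Omega>"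
    and "intfun \<Omega> f"
    and "H_continuous \<Omega> f"
    and "D \<subseteq> \<Omega>" and "\<Omega> \<subseteq> closure D"
    and "\<forall>x\<in>D. finite_ival (f x)"
  shows "nearly_finite \<Omega> f"
proof -
  let ?D' = "{x\<in>\<Omega>. finite_ival (f x)}"
  have "open ?D'" using open_finite_ival_set_if_H_continuous assms(1-3) .
  moreover have "D \<subseteq> ?D'" using assms(4,6) by auto
  then have "\<Omega> \<subseteq> closure ?D'" using assms(5) closure_mono by blast
  ultimately show ?thesis unfolding nearly_finite_def by auto
qed

end
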